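(* Let $\mathbb T$ be the unit circle with normalized Haar measure $\mu$, $m_0(z)=\frac1{\sqrt2}(1+z^2)$, $R_{m_0}f(z)=\frac13\sum_{w^3=z}|m_0(w)|^2f(w)$, and $m_0^{(n)}(z)=m_0(z)m_0(z^3)\cdots m_0(z^{3^{n-1}})$. Define $(a_n)_{n\in\mathbb Z}$ by: $a_n=2^{-k}$ if $n$ is even and $3^k+1\le n\le 3^{k+1}-1$ for some $k\ge0$; $a_n=-2^{-k}$ if $n$ is even and $-(3^{k+1}-1)\le n\le-(3^k+1)$ for some $k\ge0$; $a_n=0$ otherwise. Let $h(z)=\sum_{k\in\mathbb Z}a_kz^k$. Then (i) $h\in L^2(\mathbb T,\mu)$ but $h\notin L^\infty(\mathbb T,\mu)$; (ii) $R_{m_0}h=h$; (iii) $\sup_n\int_{\mathbb T}|m_0^{(n)}|^2|h|^2\,d\mu=\infty$. *)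

theory Defs
  imports "HOL-Analysis.Analysis"
begin

definition haar_circle :: "complex measure" where
  "haar_circle = distr (restrict_space lborel {0..1::real}) borel (\<lambda>t. cis (2 * pi * t))"

definition m0 :: "complex \<Rightarrow> complex" where
  "m0 z = complex_of_real (1 / sqrt 2) * (1 + z ^ 2)"

definition R_m0 :: "(complex \<Rightarrow> complex) \<Rightarrow> complex \<Rightarrow> complex" where
  "R_m0 f z = (1 / 3) * (\<Sum>w\<in>{w. w ^ 3 = z}. complex_of_real ((cmod (m0 w))\<^sup>2) * f w)"

definition m0_iter :: "nat \<Rightarrow> complex \<Rightarrow> complex" where
  "m0_iter n z = (\<Prod>j<n. m0 (z ^ (3 ^ j)))"

definition coeff_a :: "int \<Rightarrow> real" where
  "coeff_a n =
    (if even n \<and> (\<exists>k::nat. 3 ^ k + 1 \<le> n \<and> n \<le> 3 ^ (k + 1) - 1)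
     then (1 / 2) ^ (THE k::nat. 3 ^ k + 1 \<le> n \<and> n \<le> 3 ^ (k + 1) - 1)
     else if even n \<and> (\<exists>k::nat. - (3 ^ (k + 1) - 1) \<le> n \<and> n \<le> - (3 ^ k + 1))
     then - ((1 / 2) ^ (THE k::nat. - (3 ^ (k + 1) - 1) \<le> n \<and> n \<le> - (3 ^ k + 1)))
     else 0)"

definition partial_h :: "nat \<Rightarrow> complex \<Rightarrow> complex" where
  "partial_h N z = (\<Sum>k\<in>{- int N..int N}. complex_of_real (coeff_a k) * z powi k)"

text \<open>h is (a representative of) the L^2 limit of the partial sums.\<close>
definition is_h :: "(complex \<Rightarrow> complex) \<Rightarrow> bool" where
  "is_h h \<longleftrightarrow> h \<in> borel_measurable haar_circle \<and>
     (\<lambda>N. \<integral>\<^sup>+ z. ennreal ((cmod (partial_h N z - h z))\<^sup>2) \<partial>haar_circle) \<longlonglongrightarrow> 0"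

end

theory Submission
  imports Defs
begin

text \<open>
  On the circle, \<open>z = cis \<theta>\<close>, the coefficients are odd in \<open>k\<close>, so the partial sums are
  \<open>2i \<Sum> a\<^sub>n sin (n\<theta>)\<close>. Multiplied by \<open>2 sin \<theta>\<close>, the even-indexed sines of the block
  \<open>3^K < n < 3^(K+1)\<close> telescope to \<open>2^-K (cos (3^K \<theta>) - cos (3^(K+1) \<theta>))\<close>. Hence the partial
  sums converge off the real axis to \<open>h0 z = i (Re z - W z) / Im z\<close>, where
  \<open>W z = \<Sum>\<^sub>k 2^-(k+1) Re (z^3^(k+1))\<close> is a Weierstrass-type lacunary series; since
  \<open>\<Sum> a\<^sub>k\<^sup>2 < \<infinity>\<close>, Parseval and Fatou's lemma show that \<open>h0\<close> is also their \<open>L\<^sup>2\<close> limit.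

  For \<open>\<theta> \<in> [\<pi> / (2 \<cdot> 3^K), \<pi> / 3^K]\<close> the \<open>K\<close>-th term alone gives \<open>1 - W \<ge> 2^-K\<close>, while
  \<open>sin \<theta> \<le> \<pi> / 3^K\<close>; so \<open>|h0| \<ge> (3/2)^K / (2\<pi>)\<close> on an arc of length comparable to \<open>3^-K\<close>,
  and \<open>h0\<close> is unbounded. On the same arcs every factor of \<open>|m0\<^sup>(\<^sup>n\<^sup>)|\<^sup>2\<close> is at least \<open>8/5\<close>,
  which makes \<open>\<integral> |m0\<^sup>(\<^sup>n\<^sup>)|\<^sup>2 |h0|\<^sup>2\<close> grow like \<open>(6/5)^n\<close>.

  Finally \<open>W w = (Re w\<^sup>3 + W (w\<^sup>3)) / 2\<close> for every cube root \<open>w\<close>, and \<open>|m0 w|\<^sup>2 = 2 (Re w)\<^sup>2\<close> on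
  the circle; with these, \<open>R\<^sub>m\<^sub>0 h0 = h0\<close> reduces to two rational identities in the coordinates
  of the three cube roots.\<close>

section \<open>The coefficients\<close>

lemma pow3_block_unique:
  fixes n :: nat
  assumes "3^k < n" "n < 3^(k+1)" "3^j < n" "n < 3^(j+1)"
  shows "k = j"
proof (rule ccontr)
  assume "k \<noteq> j"
  then consider "k + 1 \<le> j" | "j + 1 \<le> k" by linarith
  then show False
  proof cases
    case 1
    then have "(3::nat)^(k+1) \<le> 3^j" by (intro power_increasing) auto
    with assms show False by linarith
  next
    case 2
    then have "(3::nat)^(j+1) \<le> 3^k" by (intro power_increasing) auto
    with assms show False by linarith
  qed
qed

lemma int_pow3_block_iff:
  fixes m :: nat
  shows "(3 ^ k + 1 \<le> int m \<and> int m \<le> 3 ^ (k + 1) - 1) \<longleftrightarrow> 3^k < m \<and> m < 3^(k+1)"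
proof -
  have "(3::int)^k = int (3^k)" "(3::int)^(k+1) = int (3^(k+1))" by simp_all
  then show ?thesis by linarith
qed

lemma coeff_a_block:
  fixes m :: nat
  assumes "3^j \<le> m" "m < 3^(j+1)"
  shows "coeff_a (int m) = (if even m then (1/2)^j else 0)"
proof (cases "even m")
  case True
  then have "m \<noteq> 3^j" by auto
  with assms have block: "3^j < m \<and> m < 3^(j+1)" by linarith
  have "(THE k::nat. 3 ^ k + 1 \<le> int m \<and> int m \<le> 3 ^ (k + 1) - 1) = j"
  proof (rule the_equality)
    show "3 ^ j + 1 \<le> int m \<and> int m \<le> 3 ^ (j + 1) - 1"
      using block int_pow3_block_iff by blast
  qed (use block pow3_block_unique int_pow3_block_iff in blast)
  then show ?thesis
    unfolding coeff_a_def using True block int_pow3_block_iff by auto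
next
  case False
  then show ?thesis unfolding coeff_a_def by simp
qed

lemma coeff_a_0: "coeff_a 0 = 0"
proof -
  have "\<not> (3 ^ k + 1 \<le> (0::int))" "\<not> (0::int) \<le> - (3 ^ k + 1)" for k :: nat
    by (smt (verit) zero_le_power)+
  then show ?thesis unfolding coeff_a_def by auto
qed

lemma coeff_a_uminus_nat: "coeff_a (- int m) = - coeff_a (int m)"
proof (cases "m = 0")
  case True
  then show ?thesis by (simp add: coeff_a_0)
next
  case False
  have no_pos: "\<not> (\<exists>k::nat. 3 ^ k + 1 \<le> - int m \<and> - int m \<le> 3 ^ (k + 1) - 1)"
    by (smt (verit) zero_le_power of_nat_0_le_iff)
  have no_neg: "\<not> (\<exists>k::nat. - (3 ^ (k + 1) - 1) \<le> int m \<and> int m \<le> - (3 ^ k + 1))"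
    using False by (smt (verit) zero_le_power of_nat_0_le_iff)
  have mirror: "(- (3 ^ (k + 1) - 1) \<le> - int m \<and> - int m \<le> - (3 ^ k + 1)) \<longleftrightarrow>
     (3 ^ k + 1 \<le> int m \<and> int m \<le> 3 ^ (k + 1) - 1)" for k :: nat
    by linarith
  show ?thesis
    by (simp only: coeff_a_def mirror no_pos no_neg even_minus simp_thms) simp
qed

lemma coeff_a_uminus: "coeff_a (- n) = - coeff_a n"
  by (cases n rule: int_cases2) (simp_all add: coeff_a_uminus_nat)

section \<open>Closed form of h\<close>

lemma partial_h_cis:
  "partial_h N (cis \<theta>) = (\<Sum>k\<in>{- int N..int N}. complex_of_real (coeff_a k) * cis (of_int k * \<theta>))"
  unfolding partial_h_def by (simp add: cis_power_int)

lemma partial_h_cis_sine_series: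
  "partial_h N (cis \<theta>) = \<i> * complex_of_real (2 * (\<Sum>n\<in>{1..N}. coeff_a (int n) * sin (real n * \<theta>)))"
proof (induction N)
  case 0
  then show ?case by (simp add: partial_h_cis coeff_a_0)
next
  case (Suc N)
  let ?n = "real (Suc N) * \<theta>"
  have ivl: "{- int (Suc N)..int (Suc N)} = insert (int (Suc N)) (insert (- int (Suc N)) {- int N..int N})"
    by auto
  have "partial_h (Suc N) (cis \<theta>) = complex_of_real (coeff_a (int (Suc N))) * cis (of_int (int (Suc N)) * \<theta>) +
      (complex_of_real (coeff_a (- int (Suc N))) * cis (of_int (- int (Suc N)) * \<theta>) + partial_h N (cis \<theta>))"
    unfolding partial_h_cis ivl by (subst sum.insert, simp, simp)+ simp
  also have "\<dots> = complex_of_real (coeff_a (int (Suc N))) * cis ?n +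
      (complex_of_real (coeff_a (- int (Suc N))) * cis (- ?n) + partial_h N (cis \<theta>))"
    by (simp add: algebra_simps)
  also have "\<dots> = complex_of_real (coeff_a (int (Suc N))) * (cis ?n - cis (- ?n)) + partial_h N (cis \<theta>)"
    by (simp only: coeff_a_uminus) (simp add: algebra_simps)
  also have "cis ?n - cis (- ?n) = 2 * \<i> * complex_of_real (sin ?n)"
    by (simp add: complex_eq_iff)
  finally show ?case
    unfolding Suc.IH by (simp add: algebra_simps)
qed

lemma two_sin_sin: "2 * sin (a::real) * sin b = cos (b - a) - cos (b + a)"
  by (simp add: cos_diff cos_add)

lemma sum_even_sin_telescope:
  assumes "odd A"
  shows "2 * sin \<theta> * (\<Sum>n\<in>{A..<A+2*d}. if even n then sin (real n * \<theta>) else 0)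
         = cos (real A * \<theta>) - cos (real (A + 2*d) * \<theta>)"
proof (induction d)
  case 0
  then show ?case by simp
next
  case (Suc d)
  have split: "{A..<A+2*Suc d} = insert (A+2*d+1) (insert (A+2*d) {A..<A+2*d})" by auto
  have "odd (A + 2*d)" "even (A + 2*d + 1)" using assms by simp_all
  then have "2 * sin \<theta> * (\<Sum>n\<in>{A..<A+2*Suc d}. if even n then sin (real n * \<theta>) else 0)
      = 2 * sin \<theta> * sin (real (A+2*d+1) * \<theta>)
        + 2 * sin \<theta> * (\<Sum>n\<in>{A..<A+2*d}. if even n then sin (real n * \<theta>) else 0)"
    unfolding split by (simp add: algebra_simps)
  also have "\<dots> = cos (real (A+2*d) * \<theta>) - cos (real (A + 2*Suc d) * \<theta>)
                  + (cos (real A * \<theta>) - cos (real (A + 2*d) * \<theta>))"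
    unfolding Suc.IH two_sin_sin by (simp add: algebra_simps)
  finally show ?case by simp
qed

lemma sin_mult_coeff_block_sum:
  "2 * sin \<theta> * (\<Sum>n\<in>{3^K..<3^(K+1)}. coeff_a (int n) * sin (real n * \<theta>))
     = (1/2)^K * (cos (3^K * \<theta>) - cos (3^(K+1) * \<theta>))"
proof -
  define S where "S = (\<Sum>n\<in>{3^K..<3^K + 2 * 3^K}. if even n then sin (real n * \<theta>) else 0)"
  have "(\<Sum>n\<in>{3^K..<3^(K+1)}. coeff_a (int n) * sin (real n * \<theta>)) = (1/2)^K * S"
    unfolding S_def sum_distrib_left by (intro sum.cong) (auto simp: coeff_a_block)
  moreover have "2 * sin \<theta> * S = cos (3^K * \<theta>) - cos (3^(K+1) * \<theta>)"
    using sum_even_sin_telescope[of "3^K" \<theta> "3^K"] by (simp add: S_def)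
  moreover have "2 * sin \<theta> * ((1/2)^K * S) = (1/2)^K * (2 * sin \<theta> * S)"
    by (simp only: mult_ac)
  ultimately show ?thesis by simp
qed

lemma sin_mult_coeff_sum:
  "2 * sin \<theta> * (\<Sum>n\<in>{1..<3^(K+1)}. coeff_a (int n) * sin (real n * \<theta>))
     = cos \<theta> - (\<Sum>j<K. (1/2)^(j+1) * cos (3^(j+1) * \<theta>)) - (1/2)^K * cos (3^(K+1) * \<theta>)"
proof (induction K)
  case 0
  then show ?case using sin_mult_coeff_block_sum[of \<theta> 0] by simp
next
  case (Suc K)
  have "{1..<(3::nat)^(Suc K+1)} = {1..<3^(K+1)} \<union> {3^(K+1)..<3^(Suc K+1)}"
    by (auto intro: order_less_le_trans[OF _ power_increasing[of "K+1" "Suc K+1" 3]])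
  then have "(\<Sum>n\<in>{1..<3^(Suc K+1)}. coeff_a (int n) * sin (real n * \<theta>)) =
      (\<Sum>n\<in>{1..<3^(K+1)}. coeff_a (int n) * sin (real n * \<theta>)) +
      (\<Sum>n\<in>{3^(K+1)..<3^(Suc K+1)}. coeff_a (int n) * sin (real n * \<theta>))"
    by (simp add: sum.union_disjoint)
  then show ?case
    using Suc.IH sin_mult_coeff_block_sum[of \<theta> "K+1"] by (simp add: algebra_simps)
qed

lemma summable_half_pow_mult:
  assumes "\<And>k. \<bar>f k\<bar> \<le> 1"
  shows "summable (\<lambda>k. (1/2::real)^(k+1) * f k)"
proof (rule summable_comparison_test)
  show "summable (\<lambda>k. (1/2::real)^(k+1))"
    using summable_geometric[of "1/2::real"] by (simp add: summable_mult)
qed (auto simp: abs_mult intro!: mult_left_le assms)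

definition weierstrass :: "complex \<Rightarrow> real" where
  "weierstrass z = (\<Sum>k. (1/2)^(k+1) * Re (z ^ 3^(k+1)))"

text \<open>Only the values on the unit circle away from \<open>\<plusminus>1\<close> matter; where \<open>Im z = 0\<close> the
  division yields 0.\<close>
definition h0 :: "complex \<Rightarrow> complex" where
  "h0 z = \<i> * complex_of_real ((Re z - weierstrass z) / Im z)"

lemma h0_measurable [measurable]: "h0 \<in> borel_measurable borel"
  unfolding h0_def weierstrass_def by measurable

lemma weierstrass_cis: "weierstrass (cis \<theta>) = (\<Sum>k. (1/2)^(k+1) * cos (3^(k+1) * \<theta>))"
  unfolding weierstrass_def by (simp add: Complex.DeMoivre)

lemma summable_weierstrass_cis: "summable (\<lambda>k. (1/2)^(k+1) * cos (3^(k+1) * (\<theta>::real)))"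
  by (rule summable_half_pow_mult) simp

lemma h0_cis: "h0 (cis \<theta>) = \<i> * complex_of_real ((cos \<theta> - weierstrass (cis \<theta>)) / sin \<theta>)"
  unfolding h0_def by simp

lemma partial_h_pow3_tendsto_h0:
  assumes "sin \<theta> \<noteq> 0"
  shows "(\<lambda>K. partial_h (3^(K+1) - 1) (cis \<theta>)) \<longlonglongrightarrow> h0 (cis \<theta>)"
proof -
  let ?S = "\<lambda>K. \<Sum>j<K. (1/2)^(j+1) * cos (3^(j+1) * \<theta>)"
  let ?r = "\<lambda>K. (1/2::real)^K * cos (3^(K+1) * \<theta>)"
  have "{1..(3::nat)^(K+1) - 1} = {1..<3^(K+1)}" for K
    by auto
  moreover have "2 * (\<Sum>n\<in>{1..<3^(K+1)}. coeff_a (int n) * sin (real n * \<theta>))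
      = (cos \<theta> - ?S K - ?r K) / sin \<theta>" for K
    using sin_mult_coeff_sum[of \<theta> K] assms by (simp add: field_simps)
  ultimately have partial: "partial_h (3^(K+1) - 1) (cis \<theta>)
      = \<i> * complex_of_real ((cos \<theta> - ?S K - ?r K) / sin \<theta>)" for K
    unfolding partial_h_cis_sine_series by simp
  have S: "?S \<longlonglongrightarrow> weierstrass (cis \<theta>)"
    unfolding weierstrass_cis by (rule summable_LIMSEQ[OF summable_weierstrass_cis])
  have r: "?r \<longlonglongrightarrow> 0"
  proof (rule Lim_null_comparison[OF _ LIMSEQ_power_zero[of "1/2::real"]])
    show "\<forall>\<^sub>F K in sequentially. norm (?r K) \<le> (1/2)^K"
      by (auto simp: abs_mult intro!: mult_left_le)
  qed simp
  have "(\<lambda>K. (cos \<theta> - ?S K - ?r K) / sin \<theta>) \<longlonglongrightarrow> (cos \<theta> - weierstrass (cis \<theta>) - 0) / sin \<theta>"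
    by (intro tendsto_intros S r assms)
  then have "(\<lambda>K. (cos \<theta> - ?S K - ?r K) / sin \<theta>) \<longlonglongrightarrow> (cos \<theta> - weierstrass (cis \<theta>)) / sin \<theta>"
    by simp
  then show ?thesis
    unfolding partial h0_cis by (intro tendsto_mult_left tendsto_of_real)
qed

section \<open>Square summability of the coefficients\<close>

lemma coeff_a_sq_block_sum_le: "(\<Sum>n\<in>{3^K..<3^(K+1)}. (coeff_a (int n))\<^sup>2) \<le> 2 * (3/4)^K"
proof -
  have "(\<Sum>n\<in>{3^K..<3^(K+1)}. (coeff_a (int n))\<^sup>2) \<le> (\<Sum>n\<in>{3^K..<(3::nat)^(K+1)}. (1/4::real)^K)"
  proof (intro sum_mono)
    fix n :: nat
    assume "n \<in> {3^K..<3^(K+1)}"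
    then have "coeff_a (int n) = (if even n then (1/2)^K else 0)"
      by (intro coeff_a_block) auto
    then show "(coeff_a (int n))\<^sup>2 \<le> (1/4)^K"
      by (simp add: power_mult_distrib[symmetric] power2_eq_square power_mult[symmetric] mult.commute)
  qed
  also have "\<dots> = 2 * 3^K * (1/4::real)^K" by simp
  also have "\<dots> = 2 * (3/4)^K" by (simp add: power_divide)
  finally show ?thesis .
qed

lemma coeff_a_sq_pow3_sum_le: "(\<Sum>n<3^K. (coeff_a (int n))\<^sup>2) \<le> 8"
proof -
  have "(\<Sum>n<3^K. (coeff_a (int n))\<^sup>2) \<le> (\<Sum>j<K. 2 * (3/4::real)^j)"
  proof (induction K)
    case 0
    then show ?case by (simp add: coeff_a_0)
  next
    case (Suc K)
    have "{..<(3::nat)^Suc K} = {..<3^K} \<union> {3^K..<3^(K+1)}" by auto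
    then have "(\<Sum>n<3^Suc K. (coeff_a (int n))\<^sup>2)
        = (\<Sum>n<3^K. (coeff_a (int n))\<^sup>2) + (\<Sum>n\<in>{3^K..<3^(K+1)}. (coeff_a (int n))\<^sup>2)"
      by (simp add: sum.union_disjoint ivl_disj_int_one(2))
    also have "\<dots> \<le> (\<Sum>j<K. 2 * (3/4::real)^j) + 2 * (3/4)^K"
      using Suc.IH coeff_a_sq_block_sum_le by (rule add_mono)
    finally show ?case by simp
  qed
  also have "\<dots> = 2 * (\<Sum>j<K. (3/4::real)^j)" by (simp add: sum_distrib_left)
  also have "(\<Sum>j<K. (3/4::real)^j) \<le> (\<Sum>j. (3/4::real)^j)"
    by (intro sum_le_suminf summable_geometric) auto
  also have "(\<Sum>j. (3/4::real)^j) = 4" using suminf_geometric[of "3/4::real"] by simp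
  finally show ?thesis by simp
qed

lemma summable_coeff_a_sq: "summable (\<lambda>n. (coeff_a (int n))\<^sup>2)"
proof (rule summableI_nonneg_bounded)
  fix n
  have "n < 2^n" by (rule less_exp)
  also have "(2::nat)^n \<le> 3^n" by (rule power_mono) auto
  finally have "n \<le> 3^n" by simp
  then have "(\<Sum>i<n. (coeff_a (int i))\<^sup>2) \<le> (\<Sum>i<3^n. (coeff_a (int i))\<^sup>2)"
    by (intro sum_mono2) auto
  also have "\<dots> \<le> 8" by (rule coeff_a_sq_pow3_sum_le)
  finally show "(\<Sum>i<n. (coeff_a (int i))\<^sup>2) \<le> 8" .
qed simp

definition coeff_tail :: "nat \<Rightarrow> real" where
  "coeff_tail N = (\<Sum>n. (coeff_a (int (n + Suc N)))\<^sup>2)"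

lemma coeff_tail_tendsto_0: "coeff_tail \<longlonglongrightarrow> 0"
proof -
  let ?a = "\<lambda>n. (coeff_a (int n))\<^sup>2"
  have tail: "coeff_tail N = suminf ?a - (\<Sum>i<Suc N. ?a i)" for N
    using suminf_split_initial_segment[OF summable_coeff_a_sq, of "Suc N"]
    unfolding coeff_tail_def by simp
  have "(\<lambda>N. \<Sum>i<Suc N. ?a i) \<longlonglongrightarrow> suminf ?a"
    using summable_LIMSEQ[OF summable_coeff_a_sq] by (rule LIMSEQ_Suc)
  then have "(\<lambda>N. suminf ?a - (\<Sum>i<Suc N. ?a i)) \<longlonglongrightarrow> suminf ?a - suminf ?a"
    by (intro tendsto_intros)
  then show ?thesis unfolding tail by simp
qed

lemma sum_coeff_a_sq_le_coeff_tail: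
  assumes "N \<le> M"
  shows "(\<Sum>n\<in>{N<..M}. (coeff_a (int n))\<^sup>2) \<le> coeff_tail N"
proof -
  have "{N<..M} = (\<lambda>n. n + Suc N) ` {..<M - N}"
  proof (intro equalityI subsetI)
    fix x
    assume "x \<in> {N<..M}"
    then have "x = (x - Suc N) + Suc N" "x - Suc N \<in> {..<M - N}" by auto
    then show "x \<in> (\<lambda>n. n + Suc N) ` {..<M - N}" by (rule image_eqI)
  qed auto
  then have "(\<Sum>n\<in>{N<..M}. (coeff_a (int n))\<^sup>2) = (\<Sum>n<M - N. (coeff_a (int (n + Suc N)))\<^sup>2)"
    by (simp add: sum.reindex inj_on_def)
  also have "\<dots> \<le> coeff_tail N"
    unfolding coeff_tail_def
    by (intro sum_le_suminf summable_ignore_initial_segment summable_coeff_a_sq) auto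
  finally show ?thesis .
qed

lemma sum_coeff_a_sq_annulus:
  "(\<Sum>k\<in>{- int (N + d)..int (N + d)} - {- int N..int N}. (coeff_a k)\<^sup>2)
     = 2 * (\<Sum>n\<in>{N<..N+d}. (coeff_a (int n))\<^sup>2)"
proof (induction d)
  case 0
  then show ?case by simp
next
  case (Suc d)
  let ?X = "{- int (N + d)..int (N + d)} - {- int N..int N}"
  have ivl: "{- int (N + Suc d)..int (N + Suc d)} - {- int N..int N} =
     insert (int (N + Suc d)) (insert (- int (N + Suc d)) ?X)"
    by auto
  have "(\<Sum>k\<in>{- int (N + Suc d)..int (N + Suc d)} - {- int N..int N}. (coeff_a k)\<^sup>2)
     = (coeff_a (int (N + Suc d)))\<^sup>2 + ((coeff_a (- int (N + Suc d)))\<^sup>2 + (\<Sum>k\<in>?X. (coeff_a k)\<^sup>2))"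
    unfolding ivl by (subst sum.insert, simp, force)+ simp
  also have "\<dots> = 2 * (coeff_a (int (N + Suc d)))\<^sup>2 + 2 * (\<Sum>n\<in>{N<..N+d}. (coeff_a (int n))\<^sup>2)"
    unfolding Suc.IH coeff_a_uminus by simp
  also have "{N<..N+d} = {N<..N + Suc d} - {N + Suc d}" by auto
  finally show ?case
    by (simp add: sum_diff1 algebra_simps)
qed

section \<open>Parseval on the circle and the square-integrable limit\<close>

abbreviation unit_lborel :: "real measure" where
  "unit_lborel \<equiv> restrict_space lborel {0..1::real}"

abbreviation circ :: "real \<Rightarrow> complex" where
  "circ t \<equiv> cis (2 * pi * t)"

lemma circ_measurable [measurable]: "circ \<in> borel_measurable borel"
  by (intro borel_measurable_continuous_onI continuous_intros)

lemma circ_measurable_unit [measurable]: "circ \<in> measurable unit_lborel borel"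
  by (intro measurable_restrict_space1) simp

lemma sets_haar_circle [simp]: "sets haar_circle = sets borel"
  unfolding haar_circle_def by simp

lemma measurable_haar_circle: "measurable haar_circle N = measurable borel N"
  by (rule measurable_cong_sets) simp_all

lemma nn_integral_haar_circle:
  assumes "f \<in> borel_measurable borel"
  shows "(\<integral>\<^sup>+ z. f z \<partial>haar_circle) = (\<integral>\<^sup>+ t. f (circ t) \<partial>unit_lborel)"
  unfolding haar_circle_def
  by (rule nn_integral_distr) (simp_all add: measurable_haar_circle[unfolded haar_circle_def] assms)

lemma AE_haar_circle_imp_unit:
  assumes "AE z in haar_circle. P z"
  shows "AE t in unit_lborel. P (circ t)"
  using assms unfolding haar_circle_def by (rule AE_distrD[OF circ_measurable_unit])

lemma integrable_unit_continuous:
  fixes f :: "real \<Rightarrow> real"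
  assumes "continuous_on {0..1} f"
  shows "integrable unit_lborel f"
proof -
  have unit: "{0..1::real} \<inter> space lborel \<in> sets lborel" by simp
  show ?thesis
    unfolding integrable_restrict_space[OF unit]
    using borel_integrable_atLeastAtMost'[OF assms] unfolding set_integrable_def .
qed

lemma integral_unit_FTC:
  fixes f F :: "real \<Rightarrow> real"
  assumes "\<And>x. (F has_real_derivative f x) (at x)" "continuous_on {0..1} f"
  shows "integral\<^sup>L unit_lborel f = F 1 - F 0"
proof -
  have "integral\<^sup>L unit_lborel f = integral\<^sup>L lborel (\<lambda>x. indicator {0..1} x *\<^sub>R f x)"
    by (rule integral_restrict_space) simp
  also have "\<dots> = F 1 - F 0"
    by (rule integral_FTC_atLeastAtMost)
       (auto simp: has_real_derivative_iff_has_vector_derivative[symmetric]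
             intro: has_field_derivative_at_within assms)
  finally show ?thesis .
qed

lemma integral_cos_2pi_int:
  fixes m :: int
  shows "integral\<^sup>L unit_lborel (\<lambda>t. cos (of_int m * (2 * pi * t))) = (if m = 0 then 1 else 0)"
proof (cases "m = 0")
  case True
  have "integral\<^sup>L unit_lborel (\<lambda>t. 1::real) = (\<lambda>t. t) 1 - (\<lambda>t. t) 0"
    by (rule integral_unit_FTC) (auto intro!: derivative_eq_intros)
  then show ?thesis using True by simp
next
  case False
  let ?F = "\<lambda>t. sin (of_int m * (2 * pi * t)) / (of_int m * 2 * pi)"
  have "integral\<^sup>L unit_lborel (\<lambda>t. cos (of_int m * (2 * pi * t))) = ?F 1 - ?F 0"
  proof (rule integral_unit_FTC)
    fix x
    show "(?F has_real_derivative cos (of_int m * (2 * pi * x))) (at x)"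
      using False by (auto intro!: derivative_eq_intros simp: field_simps)
  qed (intro continuous_intros)
  moreover have "sin (of_int m * (2 * pi * 1)) = 0"
    using sin_int_2pin[of m] by (simp add: mult.commute)
  ultimately show ?thesis using False by simp
qed

lemma norm_trig_sum_sq:
  fixes c :: "int \<Rightarrow> real"
  shows "(cmod (\<Sum>k\<in>A. complex_of_real (c k) * cis (of_int k * \<theta>)))\<^sup>2
       = (\<Sum>k\<in>A. \<Sum>l\<in>A. c k * c l * cos (of_int (k - l) * \<theta>))"
proof -
  let ?z = "\<Sum>k\<in>A. complex_of_real (c k) * cis (of_int k * \<theta>)"
  have "complex_of_real ((cmod ?z)\<^sup>2) = ?z * cnj ?z" by (rule complex_norm_square)
  also have "\<dots> = (\<Sum>k\<in>A. \<Sum>l\<in>A. complex_of_real (c k * c l) * cis (of_int (k - l) * \<theta>))"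
    unfolding cnj_sum sum_product
    by (intro sum.cong refl) (simp add: cis_cnj cis_mult algebra_simps)
  finally have "(cmod ?z)\<^sup>2 = Re (\<Sum>k\<in>A. \<Sum>l\<in>A. complex_of_real (c k * c l) * cis (of_int (k - l) * \<theta>))"
    by (metis Re_complex_of_real)
  then show ?thesis by (simp add: Re_sum)
qed

lemma parseval_unit:
  fixes c :: "int \<Rightarrow> real"
  assumes "finite A"
  shows "(\<integral>\<^sup>+ t. ennreal ((cmod (\<Sum>k\<in>A. complex_of_real (c k) * cis (of_int k * (2 * pi * t))))\<^sup>2) \<partial>unit_lborel)
        = ennreal (\<Sum>k\<in>A. (c k)\<^sup>2)"
proof -
  let ?g = "\<lambda>t. \<Sum>k\<in>A. \<Sum>l\<in>A. c k * c l * cos (of_int (k - l) * (2 * pi * t))"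
  have int: "integrable unit_lborel (\<lambda>t. c k * c l * cos (of_int (k - l) * (2 * pi * t)))" for k l
    by (intro integrable_unit_continuous continuous_intros)
  have "(\<integral>\<^sup>+ t. ennreal ((cmod (\<Sum>k\<in>A. complex_of_real (c k) * cis (of_int k * (2 * pi * t))))\<^sup>2) \<partial>unit_lborel)
     = (\<integral>\<^sup>+ t. ennreal (?g t) \<partial>unit_lborel)"
    unfolding norm_trig_sum_sq ..
  also have "\<dots> = ennreal (integral\<^sup>L unit_lborel ?g)"
  proof (rule nn_integral_eq_integral)
    show "integrable unit_lborel ?g"
      by (intro Bochner_Integration.integrable_sum int)
    show "AE t in unit_lborel. 0 \<le> ?g t"
      by (simp only: norm_trig_sum_sq[symmetric]) simp
  qed
  also have "integral\<^sup>L unit_lborel ?g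
      = (\<Sum>k\<in>A. \<Sum>l\<in>A. c k * c l * integral\<^sup>L unit_lborel (\<lambda>t. cos (of_int (k - l) * (2 * pi * t))))"
    using int by (simp add: Bochner_Integration.integral_sum Bochner_Integration.integrable_sum)
  also have "\<dots> = (\<Sum>k\<in>A. (c k)\<^sup>2)"
    unfolding integral_cos_2pi_int using assms
    by (simp add: power2_eq_square if_distrib[of "(*) _"] cong: if_cong)
  finally show ?thesis .
qed

lemma nn_integral_partial_h_diff_le:
  assumes "N \<le> M"
  shows "(\<integral>\<^sup>+ t. ennreal ((cmod (partial_h M (circ t) - partial_h N (circ t)))\<^sup>2) \<partial>unit_lborel)
           \<le> ennreal (2 * coeff_tail N)"
proof -
  obtain d where M: "M = N + d" using assms le_Suc_ex by blast
  have "{- int N..int N} \<subseteq> {- int M..int M}" using assms by auto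
  then have "partial_h M (circ t) - partial_h N (circ t) =
     (\<Sum>k\<in>{- int M..int M} - {- int N..int N}. complex_of_real (coeff_a k) * cis (of_int k * (2 * pi * t)))"
    for t
    unfolding partial_h_cis by (simp add: sum_diff)
  then have "(\<integral>\<^sup>+ t. ennreal ((cmod (partial_h M (circ t) - partial_h N (circ t)))\<^sup>2) \<partial>unit_lborel)
      = ennreal (\<Sum>k\<in>{- int M..int M} - {- int N..int N}. (coeff_a k)\<^sup>2)"
    by (simp add: parseval_unit)
  also have "\<dots> = ennreal (2 * (\<Sum>n\<in>{N<..M}. (coeff_a (int n))\<^sup>2))"
    unfolding M sum_coeff_a_sq_annulus ..
  also have "\<dots> \<le> ennreal (2 * coeff_tail N)"
    using sum_coeff_a_sq_le_coeff_tail[OF assms] by (intro ennreal_leI) simp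
  finally show ?thesis .
qed

lemma nn_integral_le_of_AE_tendsto:
  fixes f :: "nat \<Rightarrow> 'a \<Rightarrow> ennreal"
  assumes "\<And>K. f K \<in> borel_measurable M"
    and "AE x in M. (\<lambda>K. f K x) \<longlonglongrightarrow> g x"
    and "eventually (\<lambda>K. (\<integral>\<^sup>+ x. f K x \<partial>M) \<le> B) sequentially"
  shows "(\<integral>\<^sup>+ x. g x \<partial>M) \<le> B"
proof -
  have "(\<integral>\<^sup>+ x. g x \<partial>M) = (\<integral>\<^sup>+ x. liminf (\<lambda>K. f K x) \<partial>M)"
    using assms(2) by (intro nn_integral_cong_AE) (auto elim!: AE_mp intro!: lim_imp_Liminf[symmetric])
  also have "\<dots> \<le> liminf (\<lambda>K. \<integral>\<^sup>+ x. f K x \<partial>M)"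
    using assms(1) by (rule nn_integral_liminf)
  also have "\<dots> \<le> limsup (\<lambda>K. \<integral>\<^sup>+ x. f K x \<partial>M)"
    by (rule Liminf_le_Limsup) simp
  also have "\<dots> \<le> B"
    using assms(3) by (rule Limsup_bounded)
  finally show ?thesis .
qed

lemma AE_sin_2pi_nonzero: "AE t in lborel. sin (2 * pi * t) \<noteq> 0"
proof (rule AE_I')
  show "range (\<lambda>k::int. real_of_int k / 2) \<in> null_sets lborel"
    by (intro countable_imp_null_set_lborel countable_image) simp
  show "{t \<in> space lborel. \<not> sin (2 * pi * t) \<noteq> 0} \<subseteq> range (\<lambda>k::int. real_of_int k / 2)"
  proof
    fix t
    assume "t \<in> {t \<in> space lborel. \<not> sin (2 * pi * t) \<noteq> 0}"
    then have "sin ((2 * t) * pi) = 0" by (simp add: mult_ac)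
    then have "2 * t \<in> \<int>" by (simp add: sin_times_pi_eq_0)
    then obtain k where "2 * t = real_of_int k" by (auto elim: Ints_cases)
    then show "t \<in> range (\<lambda>k::int. real_of_int k / 2)" by (intro image_eqI[of _ _ k]) auto
  qed
qed

lemma partial_h_measurable [measurable]: "partial_h N \<in> borel_measurable borel"
  unfolding partial_h_def power_int_def by measurable

lemma nn_integral_partial_h_h0_le:
  "(\<integral>\<^sup>+ z. ennreal ((cmod (partial_h N z - h0 z))\<^sup>2) \<partial>haar_circle) \<le> ennreal (2 * coeff_tail N)"
proof -
  let ?u = "\<lambda>K t. ennreal ((cmod (partial_h (3^(K+1) - 1) (circ t) - partial_h N (circ t)))\<^sup>2)"
  have "AE t in unit_lborel. sin (2 * pi * t) \<noteq> 0"
    using AE_sin_2pi_nonzero by (subst AE_restrict_space_iff) (auto elim: AE_mp)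
  then have "AE t in unit_lborel.
      (\<lambda>K. ?u K t) \<longlonglongrightarrow> ennreal ((cmod (h0 (circ t) - partial_h N (circ t)))\<^sup>2)"
  proof eventually_elim
    case (elim t)
    then have "(\<lambda>K. (cmod (partial_h (3^(K+1) - 1) (circ t) - partial_h N (circ t)))\<^sup>2)
        \<longlonglongrightarrow> (cmod (h0 (circ t) - partial_h N (circ t)))\<^sup>2"
      by (intro tendsto_power tendsto_norm tendsto_diff tendsto_const partial_h_pow3_tendsto_h0)
    then show ?case by (rule tendsto_ennrealI)
  qed
  moreover have "eventually (\<lambda>K. N \<le> 3^(K+1) - 1) sequentially"
  proof (rule eventually_sequentiallyI[of N])
    fix K
    assume "N \<le> K"
    have "K < 2^K" by (rule less_exp)
    also have "(2::nat)^K \<le> 3^K" by (rule power_mono) auto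
    finally show "N \<le> 3^(K+1) - 1" using \<open>N \<le> K\<close> by simp
  qed
  then have "eventually (\<lambda>K. (\<integral>\<^sup>+ t. ?u K t \<partial>unit_lborel) \<le> ennreal (2 * coeff_tail N)) sequentially"
    by (rule eventually_mono) (rule nn_integral_partial_h_diff_le)
  moreover have "?u K \<in> borel_measurable unit_lborel" for K
    by measurable
  ultimately have "(\<integral>\<^sup>+ t. ennreal ((cmod (h0 (circ t) - partial_h N (circ t)))\<^sup>2) \<partial>unit_lborel)
      \<le> ennreal (2 * coeff_tail N)"
    by (intro nn_integral_le_of_AE_tendsto)
  moreover have "(\<integral>\<^sup>+ z. ennreal ((cmod (partial_h N z - h0 z))\<^sup>2) \<partial>haar_circle)
      = (\<integral>\<^sup>+ t. ennreal ((cmod (h0 (circ t) - partial_h N (circ t)))\<^sup>2) \<partial>unit_lborel)"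
    by (subst nn_integral_haar_circle) (simp_all add: norm_minus_commute)
  ultimately show ?thesis by simp
qed

lemma is_h_h0: "is_h h0"
  unfolding is_h_def
proof
  show "h0 \<in> borel_measurable haar_circle"
    unfolding measurable_haar_circle by simp
  have "(\<lambda>N. ennreal (2 * coeff_tail N)) \<longlonglongrightarrow> ennreal (2 * 0)"
    by (intro tendsto_ennrealI tendsto_mult tendsto_const coeff_tail_tendsto_0)
  then have bound: "(\<lambda>N. ennreal (2 * coeff_tail N)) \<longlonglongrightarrow> 0"
    by simp
  show "(\<lambda>N. \<integral>\<^sup>+ z. ennreal ((cmod (partial_h N z - h0 z))\<^sup>2) \<partial>haar_circle) \<longlonglongrightarrow> 0"
    by (rule tendsto_sandwich[OF _ _ tendsto_const bound])
       (simp_all add: nn_integral_partial_h_h0_le)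
qed

lemma norm_diff_sq_le:
  fixes a b c :: "'a::real_normed_vector"
  shows "(norm (a - b))\<^sup>2 \<le> 2 * (norm (c - a))\<^sup>2 + 2 * (norm (c - b))\<^sup>2"
proof -
  have "norm (a - b) \<le> norm (c - a) + norm (c - b)"
    using norm_triangle_ineq4[of "c - b" "c - a"] by (simp add: add.commute)
  then have "(norm (a - b))\<^sup>2 \<le> (norm (c - a) + norm (c - b))\<^sup>2"
    by (intro power_mono) simp_all
  also have "\<dots> \<le> 2 * (norm (c - a))\<^sup>2 + 2 * (norm (c - b))\<^sup>2"
    using sum_squares_bound[of "norm (c - a)" "norm (c - b)"] by (simp add: power2_sum)
  finally show ?thesis .
qed

lemma AE_eq_of_L2_limits:
  fixes f :: "nat \<Rightarrow> 'a \<Rightarrow> 'b::{real_normed_vector, second_countable_topology}"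
  assumes [measurable]: "\<And>N. f N \<in> borel_measurable M" "g \<in> borel_measurable M" "h \<in> borel_measurable M"
    and g: "(\<lambda>N. \<integral>\<^sup>+ x. ennreal ((norm (f N x - g x))\<^sup>2) \<partial>M) \<longlonglongrightarrow> 0"
    and h: "(\<lambda>N. \<integral>\<^sup>+ x. ennreal ((norm (f N x - h x))\<^sup>2) \<partial>M) \<longlonglongrightarrow> 0"
  shows "AE x in M. g x = h x"
proof -
  let ?G = "\<lambda>N. \<integral>\<^sup>+ x. ennreal ((norm (f N x - g x))\<^sup>2) \<partial>M"
  let ?H = "\<lambda>N. \<integral>\<^sup>+ x. ennreal ((norm (f N x - h x))\<^sup>2) \<partial>M"
  let ?I = "\<integral>\<^sup>+ x. ennreal ((norm (g x - h x))\<^sup>2) \<partial>M"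
  have "?I \<le> 2 * ?G N + 2 * ?H N" for N
  proof -
    have "?I \<le> (\<integral>\<^sup>+ x. 2 * ennreal ((norm (f N x - g x))\<^sup>2) + 2 * ennreal ((norm (f N x - h x))\<^sup>2) \<partial>M)"
    proof (rule nn_integral_mono)
      fix x
      have "ennreal ((norm (g x - h x))\<^sup>2)
          \<le> ennreal (2 * (norm (f N x - g x))\<^sup>2 + 2 * (norm (f N x - h x))\<^sup>2)"
        by (intro ennreal_leI norm_diff_sq_le)
      then show "ennreal ((norm (g x - h x))\<^sup>2)
          \<le> 2 * ennreal ((norm (f N x - g x))\<^sup>2) + 2 * ennreal ((norm (f N x - h x))\<^sup>2)"
        by (simp add: ennreal_plus ennreal_mult)
    qed
    also have "\<dots> = 2 * ?G N + 2 * ?H N"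
      by (simp add: nn_integral_add nn_integral_cmult)
    finally show ?thesis .
  qed
  moreover have "(\<lambda>N. 2 * ?G N + 2 * ?H N) \<longlonglongrightarrow> 2 * 0 + 2 * 0"
    by (intro tendsto_intros g h) auto
  ultimately have "?I \<le> 0"
    by (intro LIMSEQ_le_const[where X="\<lambda>N. 2 * ?G N + 2 * ?H N"]) auto
  then have "?I = 0" by simp
  then have "AE x in M. ennreal ((norm (g x - h x))\<^sup>2) = 0"
    by (subst (asm) nn_integral_0_iff_AE) auto
  then show ?thesis by eventually_elim simp
qed

lemma is_h_imp_AE_eq_h0:
  assumes "is_h h"
  shows "AE z in haar_circle. h z = h0 z"
  using assms is_h_h0 unfolding is_h_def measurable_haar_circle
  by (intro AE_eq_of_L2_limits[where f = partial_h]) (simp_all add: measurable_haar_circle)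

lemma integrable_norm_sq_of_is_h:
  assumes "is_h h"
  shows "integrable haar_circle (\<lambda>z. (cmod (h z))\<^sup>2)"
proof (rule integrable_cong_AE_imp)
  have "partial_h 0 z = 0" for z
    unfolding partial_h_def by (simp add: coeff_a_0)
  then have "(\<integral>\<^sup>+ z. ennreal (norm ((cmod (h0 z))\<^sup>2)) \<partial>haar_circle) \<le> ennreal (2 * coeff_tail 0)"
    using nn_integral_partial_h_h0_le[of 0] by simp
  then show "integrable haar_circle (\<lambda>z. (cmod (h0 z))\<^sup>2)"
    by (intro integrableI_bounded) (simp_all add: measurable_haar_circle top.not_eq_extremum
        order_le_less_trans[OF _ ennreal_less_top])
  have [measurable]: "h \<in> borel_measurable haar_circle"
    using assms unfolding is_h_def by simp
  show "(\<lambda>z. (cmod (h z))\<^sup>2) \<in> borel_measurable haar_circle"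
    by measurable
  show "AE z in haar_circle. (cmod (h0 z))\<^sup>2 = (cmod (h z))\<^sup>2"
    using is_h_imp_AE_eq_h0[OF assms] by eventually_elim simp
qed

section \<open>Growth of h near 1\<close>

lemma one_minus_cos_le: "1 - cos (x::real) \<le> x\<^sup>2 / 2"
proof -
  have "1 - cos x = 2 * (sin (x/2))\<^sup>2"
    using cos_double_sin[of "x/2"] by simp
  moreover have "(sin (x/2))\<^sup>2 \<le> (x/2)\<^sup>2"
    using abs_sin_x_le_abs_x[of "x/2"] by (metis abs_ge_zero power2_abs power_mono)
  ultimately show ?thesis by (simp add: power_divide)
qed

lemma one_minus_weierstrass_cis:
  "1 - weierstrass (cis \<theta>) = (\<Sum>k. (1/2)^(k+1) * (1 - cos (3^(k+1) * \<theta>)))"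
proof -
  have half: "summable (\<lambda>k. (1/2::real)^(k+1))"
    using summable_half_pow_mult[of "\<lambda>_. 1"] by simp
  have "(\<Sum>k. (1/2::real)^(k+1)) = 1"
    using suminf_mult[OF summable_geometric[of "1/2::real"], of "1/2"]
      suminf_geometric[of "1/2::real"] by simp
  then have "1 - weierstrass (cis \<theta>)
      = (\<Sum>k. (1/2::real)^(k+1)) - (\<Sum>k. (1/2)^(k+1) * cos (3^(k+1) * \<theta>))"
    unfolding weierstrass_cis by simp
  also have "\<dots> = (\<Sum>k. (1/2::real)^(k+1) - (1/2)^(k+1) * cos (3^(k+1) * \<theta>))"
    by (rule suminf_diff[OF half summable_weierstrass_cis])
  finally show ?thesis by (simp add: algebra_simps)
qed

lemma one_minus_weierstrass_cis_ge:
  assumes "1 \<le> K"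
  shows "(1/2)^K * (1 - cos (3^K * \<theta>)) \<le> 1 - weierstrass (cis \<theta>)"
proof -
  let ?f = "\<lambda>k. (1/2::real)^(k+1) * (1 - cos (3^(k+1) * \<theta>))"
  have "summable ?f"
    using summable_diff[OF summable_half_pow_mult[of "\<lambda>_. 1"] summable_weierstrass_cis[of \<theta>]]
    by (simp add: algebra_simps)
  then have "sum ?f {K - 1} \<le> suminf ?f"
    by (rule sum_le_suminf) auto
  then show ?thesis unfolding one_minus_weierstrass_cis using assms by simp
qed

lemma cos_minus_weierstrass_cis_ge:
  assumes K: "2 \<le> K" and \<theta>: "pi / (2 * 3^K) \<le> \<theta>" "\<theta> \<le> pi / 3^K"
  shows "(1/2)^K / 2 \<le> cos \<theta> - weierstrass (cis \<theta>)"
proof -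
  have "pi / 2 \<le> 3^K * \<theta>" "3^K * \<theta> \<le> pi"
    using \<theta> by (simp_all add: field_simps)
  then have "0 \<le> cos (pi - 3^K * \<theta>)" by (intro cos_ge_zero) auto
  then have "(1/2::real)^K \<le> (1/2)^K * (1 - cos (3^K * \<theta>))"
    by (simp add: mult_left_le)
  also have "\<dots> \<le> 1 - weierstrass (cis \<theta>)"
    using K by (intro one_minus_weierstrass_cis_ge) simp
  finally have far: "(1/2)^K \<le> 1 - weierstrass (cis \<theta>)" .
  have "0 < \<theta>" using \<theta>(1) by (rule order_less_le_trans[rotated]) simp
  then have "\<theta>\<^sup>2 \<le> (pi / 3^K)\<^sup>2" using \<theta>(2) by (intro power_mono) auto
  also have "\<dots> = pi\<^sup>2 / 9^K"
    by (simp add: power_divide power2_eq_square power_mult_distrib[symmetric])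
  also have "\<dots> \<le> (9/2)^K / 9^K"
  proof (intro divide_right_mono)
    have "pi\<^sup>2 \<le> 4\<^sup>2" using pi_less_4 by (intro power_mono) auto
    also have "(4::real)\<^sup>2 \<le> (9/2)^2" by (simp add: power2_eq_square)
    also have "(9/2::real)^2 \<le> (9/2)^K" using K by (intro power_increasing) auto
    finally show "pi\<^sup>2 \<le> (9/2)^K" .
  qed simp
  also have "\<dots> = (1/2)^K" by (simp add: power_divide)
  finally have "1 - cos \<theta> \<le> (1/2)^K / 2"
    using one_minus_cos_le[of \<theta>] by simp
  with far show ?thesis by simp
qed

lemma norm_h0_cis_ge:
  assumes K: "2 \<le> K" and \<theta>: "pi / (2 * 3^K) \<le> \<theta>" "\<theta> \<le> pi / 3^K"
  shows "(3/2)^K / (2 * pi) \<le> cmod (h0 (cis \<theta>))"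
proof -
  have "(1::real) < 3^K" using K by (intro one_less_power) auto
  then have "\<theta> < pi"
    using \<theta>(2) by (simp add: divide_less_eq order_le_less_trans)
  moreover have "0 < \<theta>" using \<theta>(1) by (rule order_less_le_trans[rotated]) simp
  ultimately have sin_pos: "0 < sin \<theta>" by (intro sin_gt_zero)
  have sin_le: "sin \<theta> \<le> pi / 3^K" using sin_x_le_x[of \<theta>] \<open>0 < \<theta>\<close> \<theta>(2) by simp
  have "(3/2)^K / (2 * pi) = ((1/2)^K / 2) / (pi / 3^K)"
    by (simp add: power_divide field_simps)
  also have "\<dots> \<le> ((1/2)^K / 2) / sin \<theta>"
    using sin_pos sin_le by (intro divide_left_mono) auto
  also have "\<dots> \<le> (cos \<theta> - weierstrass (cis \<theta>)) / sin \<theta>"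
    using sin_pos cos_minus_weierstrass_cis_ge[OF assms] by (intro divide_right_mono) auto
  also have "\<dots> \<le> \<bar>(cos \<theta> - weierstrass (cis \<theta>)) / sin \<theta>\<bar>" by (rule abs_ge_self)
  also have "\<dots> = cmod (h0 (cis \<theta>))"
    unfolding h0_cis by (simp only: norm_mult norm_ii norm_of_real mult_1)
  finally show ?thesis .
qed

lemma norm_m0_cis_sq: "(cmod (m0 (cis \<phi>)))\<^sup>2 = 2 * (cos \<phi>)\<^sup>2"
proof -
  have "m0 (cis \<phi>) = complex_of_real (1 / sqrt 2) * (1 + cis (2 * \<phi>))"
    unfolding m0_def by (simp add: Complex.DeMoivre)
  then have "(cmod (m0 (cis \<phi>)))\<^sup>2 = (1/2) * ((1 + cos (2*\<phi>))\<^sup>2 + (sin (2*\<phi>))\<^sup>2)"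
    by (simp add: norm_mult cmod_power2 power_mult_distrib power_divide)
  also have "\<dots> = 1 + cos (2 * \<phi>)"
    using sin_cos_squared_add[of "2*\<phi>"] by (simp add: power2_sum algebra_simps)
  also have "\<dots> = 2 * (cos \<phi>)\<^sup>2" by (simp add: cos_double sin_squared_eq)
  finally show ?thesis .
qed

lemma norm_m0_iter_cis_sq: "(cmod (m0_iter n (cis \<theta>)))\<^sup>2 = (\<Prod>j<n. 2 * (cos (3^j * \<theta>))\<^sup>2)"
  unfolding m0_iter_def
  by (simp add: prod_norm[symmetric] prod_power_distrib Complex.DeMoivre norm_m0_cis_sq)

text \<open>Each factor is at least \<open>2 (9/10)\<^sup>2 \<ge> 8/5\<close>, since \<open>3\<^sup>j \<theta> \<le> \<pi>/9 < 4/9\<close>.\<close>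
lemma norm_m0_iter_cis_sq_ge:
  assumes "0 \<le> \<theta>" "\<theta> \<le> pi / 3^(n+1)"
  shows "(8/5::real)^n \<le> (cmod (m0_iter n (cis \<theta>)))\<^sup>2"
proof -
  have "(8/5::real)^n = (\<Prod>j<n. 8/5)" by simp
  also have "\<dots> \<le> (\<Prod>j<n. 2 * (cos (3^j * \<theta>))\<^sup>2)"
  proof (rule prod_mono)
    fix j
    assume "j \<in> {..<n}"
    then have "(3::real)^j * 9 \<le> 3^(n+1)"
      using power_increasing[of "j+2" "n+1" "3::real"] by (simp add: power_add)
    then have "3^j * \<theta> \<le> 3^j * (pi / (3^j * 9))"
      using assms by (intro mult_left_mono order_trans[OF assms(2)] divide_left_mono) auto
    also have "\<dots> \<le> 4/9" using pi_less_4 by simp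
    finally have "(3^j * \<theta>)\<^sup>2 \<le> (4/9)\<^sup>2"
      using assms by (intro power_mono) auto
    then have "9/10 \<le> cos (3^j * \<theta>)"
      using one_minus_cos_le[of "3^j * \<theta>"] by (simp add: power_divide)
    then have "(9/10)\<^sup>2 \<le> (cos (3^j * \<theta>))\<^sup>2" by (intro power_mono) auto
    then show "0 \<le> (8/5::real) \<and> 8/5 \<le> 2 * (cos (3^j * \<theta>))\<^sup>2" by (simp add: power2_eq_square)
  qed
  finally show ?thesis unfolding norm_m0_iter_cis_sq .
qed

definition small_arc :: "nat \<Rightarrow> real set" where
  "small_arc K = {1 / (4 * 3^K) .. 1 / (2 * 3^K)}"

lemma small_arc_subset: "small_arc K \<subseteq> {0..1}"
proof -
  have "(1::real) \<le> 2 * 3^K" using one_le_power[of "3::real" K] by linarith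
  then show ?thesis unfolding small_arc_def by (auto intro: order_trans)
qed

lemma small_arc_sets: "small_arc K \<in> sets unit_lborel"
  using small_arc_subset by (subst sets_restrict_space_iff) (auto simp: small_arc_def)

lemma emeasure_small_arc: "emeasure unit_lborel (small_arc K) = ennreal (1 / (4 * 3^K))"
proof -
  have "emeasure unit_lborel (small_arc K) = emeasure lborel (small_arc K)"
    using small_arc_subset by (intro emeasure_restrict_space) (auto simp: small_arc_def)
  also have "\<dots> = ennreal (1 / (2 * 3^K) - 1 / (4 * 3^K))"
    unfolding small_arc_def by (subst emeasure_lborel_Icc) (auto simp: field_simps)
  also have "1 / (2 * 3^K) - 1 / (4 * 3^K) = 1 / (4 * (3::real)^K)" by (simp add: field_simps)
  finally show ?thesis .
qed

lemma small_arc_angle: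
  assumes "t \<in> small_arc K"
  shows "pi / (2 * 3^K) \<le> 2 * pi * t" "2 * pi * t \<le> pi / 3^K"
proof -
  from assms have t: "1 / (4 * 3^K) \<le> t" "t \<le> 1 / (2 * 3^K)" unfolding small_arc_def by auto
  have "2 * pi * (1 / (4 * 3^K)) \<le> 2 * pi * t" using t(1) by (intro mult_left_mono) auto
  then show "pi / (2 * 3^K) \<le> 2 * pi * t" by simp
  have "2 * pi * t \<le> 2 * pi * (1 / (2 * 3^K))" using t(2) by (intro mult_left_mono) auto
  then show "2 * pi * t \<le> pi / 3^K" by simp
qed

lemma not_AE_notin_small_arc: "\<not> (AE t in unit_lborel. t \<notin> small_arc K)"
proof
  assume "AE t in unit_lborel. t \<notin> small_arc K"
  then have "emeasure unit_lborel (small_arc K) = (\<integral>\<^sup>+ t. 0 \<partial>unit_lborel)"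
    unfolding nn_integral_indicator[symmetric, OF small_arc_sets]
    by (intro nn_integral_cong_AE) (auto elim: AE_mp)
  then show False unfolding emeasure_small_arc by simp
qed

lemma not_AE_bounded_of_is_h:
  assumes "is_h h"
  shows "\<not> (\<exists>C. AE z in haar_circle. cmod (h z) \<le> C)"
proof
  assume "\<exists>C. AE z in haar_circle. cmod (h z) \<le> C"
  then obtain C where "AE z in haar_circle. cmod (h z) \<le> C" by blast
  with is_h_imp_AE_eq_h0[OF assms] have "AE z in haar_circle. cmod (h0 z) \<le> C"
    by eventually_elim simp
  then have C: "AE t in unit_lborel. cmod (h0 (circ t)) \<le> C"
    by (rule AE_haar_circle_imp_unit)
  obtain n where n: "2 * pi * \<bar>C\<bar> < (3/2::real)^n" using real_arch_pow[of "3/2"] by auto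
  let ?K = "n + 2"
  have "C \<le> \<bar>C\<bar>" by simp
  also have "\<bar>C\<bar> < (3/2::real)^n / (2 * pi)"
    using n by (simp add: pos_less_divide_eq mult.commute)
  also have "\<dots> \<le> (3/2)^?K / (2 * pi)"
    by (intro divide_right_mono power_increasing) auto
  finally have bound: "C < (3/2)^?K / (2 * pi)" .
  have "AE t in unit_lborel. t \<notin> small_arc ?K"
    using C
  proof eventually_elim
    case (elim t)
    show ?case
      using norm_h0_cis_ge[OF _ small_arc_angle, of ?K t] bound elim by auto
  qed
  then show False using not_AE_notin_small_arc by blast
qed

lemma nn_integral_m0_iter_h0_ge:
  "ennreal (9 / (256 * pi\<^sup>2) * (6/5)^n)
     \<le> (\<integral>\<^sup>+ t. ennreal ((cmod (m0_iter n (circ t)))\<^sup>2 * (cmod (h0 (circ t)))\<^sup>2) \<partial>unit_lborel)"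
proof -
  define B where "B = (8/5::real)^n * ((3/2)^(n+2) / (2 * pi))\<^sup>2"
  have "B * (1 / (4 * 3^(n+2))) = (8/5::real)^n * (9/4)^(n+2) / 3^(n+2) / (16 * pi\<^sup>2)"
    unfolding B_def by (simp add: power_divide power_mult_distrib field_simps power2_eq_square
        flip: power_mult_distrib)
  also have "\<dots> = 9 / (256 * pi\<^sup>2) * (6/5)^n"
    by (simp add: power_divide field_simps power_add flip: power_mult_distrib)
  finally have "ennreal (9 / (256 * pi\<^sup>2) * (6/5)^n) = ennreal B * emeasure unit_lborel (small_arc (n+2))"
    unfolding emeasure_small_arc B_def by (simp flip: ennreal_mult)
  also have "\<dots> = (\<integral>\<^sup>+ t. ennreal B * indicator (small_arc (n+2)) t \<partial>unit_lborel)"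
    by (rule nn_integral_cmult_indicator[symmetric, OF small_arc_sets])
  also have "\<dots> \<le> (\<integral>\<^sup>+ t. ennreal ((cmod (m0_iter n (circ t)))\<^sup>2 * (cmod (h0 (circ t)))\<^sup>2) \<partial>unit_lborel)"
  proof (rule nn_integral_mono)
    fix t
    show "ennreal B * indicator (small_arc (n+2)) t
        \<le> ennreal ((cmod (m0_iter n (circ t)))\<^sup>2 * (cmod (h0 (circ t)))\<^sup>2)"
    proof (cases "t \<in> small_arc (n+2)")
      case True
      note angle = small_arc_angle[OF True]
      have "0 \<le> 2 * pi * t" using angle(1) by (rule order_trans[rotated]) simp
      moreover have "pi / 3^(n+2) \<le> pi / 3^(n+1)"
        by (intro divide_left_mono power_increasing) auto
      ultimately have "(8/5::real)^n \<le> (cmod (m0_iter n (circ t)))\<^sup>2"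
        using angle(2) by (intro norm_m0_iter_cis_sq_ge) auto
      moreover have "((3/2)^(n+2) / (2 * pi))\<^sup>2 \<le> (cmod (h0 (circ t)))\<^sup>2"
        using norm_h0_cis_ge[OF _ angle] by (intro power_mono) auto
      ultimately have "B \<le> (cmod (m0_iter n (circ t)))\<^sup>2 * (cmod (h0 (circ t)))\<^sup>2"
        unfolding B_def by (intro mult_mono) auto
      then show ?thesis using True by (simp add: ennreal_leI)
    qed simp
  qed
  finally show ?thesis .
qed

lemma SUP_nn_integral_m0_iter_is_h:
  assumes "is_h h"
  shows "(SUP n. \<integral>\<^sup>+ z. ennreal ((cmod (m0_iter n z))\<^sup>2 * (cmod (h z))\<^sup>2) \<partial>haar_circle) = \<infinity>"
proof -
  have [measurable]: "m0_iter n \<in> borel_measurable borel" for n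
    unfolding m0_iter_def m0_def by measurable
  have integral_eq: "(\<integral>\<^sup>+ z. ennreal ((cmod (m0_iter n z))\<^sup>2 * (cmod (h z))\<^sup>2) \<partial>haar_circle)
       = (\<integral>\<^sup>+ t. ennreal ((cmod (m0_iter n (circ t)))\<^sup>2 * (cmod (h0 (circ t)))\<^sup>2) \<partial>unit_lborel)" for n
  proof -
    have "(\<integral>\<^sup>+ z. ennreal ((cmod (m0_iter n z))\<^sup>2 * (cmod (h z))\<^sup>2) \<partial>haar_circle)
        = (\<integral>\<^sup>+ z. ennreal ((cmod (m0_iter n z))\<^sup>2 * (cmod (h0 z))\<^sup>2) \<partial>haar_circle)"
      using is_h_imp_AE_eq_h0[OF assms] by (intro nn_integral_cong_AE) (auto elim: AE_mp)
    then show ?thesis by (simp add: nn_integral_haar_circle)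
  qed
  have "\<exists>n. x < (\<integral>\<^sup>+ z. ennreal ((cmod (m0_iter n z))\<^sup>2 * (cmod (h z))\<^sup>2) \<partial>haar_circle)"
    if "x < \<infinity>" for x
  proof -
    obtain r where r: "x = ennreal r" "0 \<le> r" using \<open>x < \<infinity>\<close> by (cases x) auto
    define c where "c = 9 / (256 * pi\<^sup>2)"
    have "0 < c" unfolding c_def by simp
    obtain n where "r / c < (6/5::real)^n" using real_arch_pow[of "6/5"] by auto
    then have "r < c * (6/5)^n" using \<open>0 < c\<close> by (simp add: pos_divide_less_eq mult.commute)
    then have "x < ennreal (c * (6/5)^n)" using r by (simp add: ennreal_lessI)
    also have "\<dots> \<le> (\<integral>\<^sup>+ z. ennreal ((cmod (m0_iter n z))\<^sup>2 * (cmod (h z))\<^sup>2) \<partial>haar_circle)"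
      unfolding integral_eq c_def by (rule nn_integral_m0_iter_h0_ge)
    finally show ?thesis by blast
  qed
  then show ?thesis by (simp add: SUP_eq_top_iff top_ennreal_def[symmetric])
qed

section \<open>Invariance under the transfer operator\<close>

definition omega3 :: complex where
  "omega3 = Complex (-1/2) (sqrt 3 / 2)"

lemma omega3_cis: "omega3 = cis (2 * pi / 3)"
  using cos_120' sin_120' by (simp add: omega3_def complex_eq_iff mult.commute)

lemma omega3_sum: "1 + omega3 + omega3 * omega3 = 0"
  by (simp add: omega3_def complex_eq_iff)

lemma omega3_cube: "omega3 * omega3 * omega3 = 1"
  by (simp add: omega3_def complex_eq_iff algebra_simps)

lemma cube_roots_eq: "{w. w^3 = p^3} = {p, p * omega3, p * omega3 * omega3}"
proof -
  have "(w - p) * (w - p * omega3) * (w - p * omega3 * omega3) = w^3 - p^3" for w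
    using omega3_sum omega3_cube by algebra
  then have "w^3 = p^3 \<longleftrightarrow> (w - p) * (w - p * omega3) * (w - p * omega3 * omega3) = 0" for w
    by simp
  then show ?thesis by auto
qed

lemma R_m0_cube:
  assumes "p \<noteq> 0"
  shows "R_m0 f (p^3) = (1/3) * (complex_of_real ((cmod (m0 p))\<^sup>2) * f p +
      complex_of_real ((cmod (m0 (p * omega3)))\<^sup>2) * f (p * omega3) +
      complex_of_real ((cmod (m0 (p * omega3 * omega3)))\<^sup>2) * f (p * omega3 * omega3))"
proof -
  have "omega3 \<noteq> 1" "omega3 * omega3 \<noteq> 1" "omega3 * omega3 \<noteq> omega3"
    by (simp_all add: omega3_def complex_eq_iff)
  then have "p \<noteq> p * omega3" "p \<noteq> p * omega3 * omega3" "p * omega3 \<noteq> p * omega3 * omega3"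
    using assms by (metis mult.assoc mult_cancel_left mult_cancel_left1)+
  then show ?thesis
    unfolding R_m0_def cube_roots_eq by (simp add: algebra_simps)
qed

lemma norm_m0_sq_unit:
  assumes "cmod w = 1"
  shows "(cmod (m0 w))\<^sup>2 = 2 * (Re w)\<^sup>2"
proof -
  have "w \<noteq> 0" using assms by auto
  then have "cis (Arg w) = w" using assms by (simp add: cis_Arg sgn_div_norm)
  then show ?thesis using norm_m0_cis_sq[of "Arg w"] by (metis cis.sel(1))
qed

lemma weierstrass_cube_root:
  assumes z: "cmod z = 1" and w: "w^3 = z"
  shows "weierstrass w = (Re z + weierstrass z) / 2"
proof -
  let ?f = "\<lambda>k::nat. (1/2::real)^(k+1) * Re (z^(3^k))"
  have Re_bound: "\<bar>Re (z^m)\<bar> \<le> 1" for m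
    using abs_Re_le_cmod[of "z^m"] z by (simp add: norm_power)
  have roots: "w^(3^(k+1)) = z^(3^k)" for k
    using w by (simp add: power_mult)
  have summable: "summable ?f"
    using summable_half_pow_mult[of "\<lambda>k. Re (z^(3^k))"] Re_bound by blast
  have "weierstrass w = suminf ?f"
    unfolding weierstrass_def using roots by simp
  also have "\<dots> = (\<Sum>k. ?f (Suc k)) + ?f 0"
    using suminf_split_head[OF summable] by simp
  also have "(\<Sum>k. ?f (Suc k)) = (\<Sum>k. (1/2) * ((1/2::real)^(k+1) * Re (z^(3^(k+1)))))"
    by (simp add: algebra_simps)
  also have "\<dots> = (1/2) * weierstrass z"
    unfolding weierstrass_def
    by (rule suminf_mult) (rule summable_half_pow_mult, simp add: Re_bound)
  finally show ?thesis by simp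
qed

lemma sum_three_fractions:
  fixes x0 x1 x2 b0 b1 b2 :: real
  assumes "b0 \<noteq> 0" "b1 \<noteq> 0" "b2 \<noteq> 0"
    and "-4 * (x0 * b1 * b2 + b0 * x1 * b2 + b0 * b1 * x2) = N"
  shows "x0 / b0 + x1 / b1 + x2 / b2 = N / (-4 * b0 * b1 * b2)"
proof -
  have "x0 / b0 + x1 / b1 + x2 / b2 = (x0 * b1 * b2 + b0 * x1 * b2 + b0 * b1 * x2) / (b0 * b1 * b2)"
    using assms(1-3) by (simp add: field_simps)
  also have "\<dots> = (-4 * (x0 * b1 * b2 + b0 * x1 * b2 + b0 * b1 * x2)) / (-4 * (b0 * b1 * b2))"
    by (subst mult_divide_mult_cancel_left) simp_all
  finally show ?thesis unfolding assms(4) by (simp only: mult.assoc)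
qed

text \<open>The numerators and denominators are the real and imaginary parts of the cube roots
  \<open>p, p \<omega>, p \<omega>\<^sup>2\<close> of \<open>p\<^sup>3\<close>, where \<open>p = c + i s\<close> and \<open>r = \<surd>3/2\<close>; the product of the imaginary
  parts is \<open>-Im (p\<^sup>3) / 4\<close>.\<close>
lemma cube_root_fraction_identities:
  fixes c s r :: real
  assumes cs: "c\<^sup>2 + s\<^sup>2 = 1" and r: "r\<^sup>2 = 3/4"
    and nz: "s \<noteq> 0" "- s/2 + r * c \<noteq> 0" "- s/2 - r * c \<noteq> 0"
  shows "c\<^sup>2 / s + (- c/2 - r * s)\<^sup>2 / (- s/2 + r * c) + (- c/2 + r * s)\<^sup>2 / (- s/2 - r * c)
           = 3 / (3 * c\<^sup>2 * s - s^3)"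
    and "c^3 / s + (- c/2 - r * s)^3 / (- s/2 + r * c) + (- c/2 + r * s)^3 / (- s/2 - r * c)
           = 3 * (c^3 - 3 * c * s\<^sup>2) / (3 * c\<^sup>2 * s - s^3)"
proof -
  have D: "3 * c\<^sup>2 * s - s^3 = -4 * s * (- s/2 + r * c) * (- s/2 - r * c)"
    using r by algebra
  show "c\<^sup>2 / s + (- c/2 - r * s)\<^sup>2 / (- s/2 + r * c) + (- c/2 + r * s)\<^sup>2 / (- s/2 - r * c)
           = 3 / (3 * c\<^sup>2 * s - s^3)"
    unfolding D by (rule sum_three_fractions[OF nz]) (use cs r in algebra)
  show "c^3 / s + (- c/2 - r * s)^3 / (- s/2 + r * c) + (- c/2 + r * s)^3 / (- s/2 - r * c)
           = 3 * (c^3 - 3 * c * s\<^sup>2) / (3 * c\<^sup>2 * s - s^3)"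
    unfolding D by (rule sum_three_fractions[OF nz]) (use cs r in algebra)
qed

lemma Re_Im_mult_omega3:
  "Re (p * omega3) = - Re p / 2 - sqrt 3 / 2 * Im p"
  "Im (p * omega3) = - Im p / 2 + sqrt 3 / 2 * Re p"
proof -
  have omega3: "Re omega3 = -1/2" "Im omega3 = sqrt 3 / 2" by (simp_all add: omega3_def)
  show "Re (p * omega3) = - Re p / 2 - sqrt 3 / 2 * Im p"
    "Im (p * omega3) = - Im p / 2 + sqrt 3 / 2 * Re p"
    by (simp_all add: omega3 algebra_simps)
qed

lemma norm_m0_sq_mult_h0_cube_root:
  assumes "cmod z = 1" "cmod w = 1" "w^3 = z"
  shows "complex_of_real ((cmod (m0 w))\<^sup>2) * h0 w
      = \<i> * complex_of_real (2 * ((Re w)^3 / Im w - (Re z + weierstrass z) / 2 * ((Re w)\<^sup>2 / Im w)))"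
proof -
  let ?V = "(Re z + weierstrass z) / 2"
  have "h0 w = \<i> * complex_of_real ((Re w - ?V) / Im w)"
    unfolding h0_def weierstrass_cube_root[OF assms(1,3)] ..
  moreover have "2 * (Re w)\<^sup>2 * ((Re w - ?V) / Im w) = 2 * ((Re w)^3 / Im w - ?V * ((Re w)\<^sup>2 / Im w))"
    by (simp add: diff_divide_distrib algebra_simps power2_eq_square power3_eq_cube)
  ultimately show ?thesis
    unfolding norm_m0_sq_unit[OF assms(2)] by (metis mult.left_commute of_real_mult)
qed

lemma R_m0_h0_cube:
  assumes p: "cmod p = 1" and Im_nz: "Im (p^3) \<noteq> 0"
  shows "R_m0 h0 (p^3) = h0 (p^3)"
proof -
  define z where "z = p^3"
  define c where "c = Re p"
  define s where "s = Im p"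
  define r where "r = sqrt 3 / 2"
  define V where "V = (Re z + weierstrass z) / 2"
  have cs: "c\<^sup>2 + s\<^sup>2 = 1" using p cmod_power2[of p] by (simp add: c_def s_def)
  have r2: "r\<^sup>2 = 3/4" unfolding r_def by (simp add: power_divide)
  have coords: "Re p = c" "Im p = s"
    "Re (p * omega3) = - c/2 - r * s" "Im (p * omega3) = - s/2 + r * c"
    "Re (p * omega3 * omega3) = - c/2 + r * s" "Im (p * omega3 * omega3) = - s/2 - r * c"
    by (simp_all only: c_def s_def r_def Re_Im_mult_omega3) (simp_all add: field_simps)
  have Re_z: "Re z = c^3 - 3 * c * s\<^sup>2" and Im_z: "Im z = 3 * c\<^sup>2 * s - s^3"
    unfolding z_def c_def s_def by (simp_all add: power3_eq_cube power2_eq_square algebra_simps)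
  have "3 * c\<^sup>2 * s - s^3 = -4 * s * (- s/2 + r * c) * (- s/2 - r * c)"
    using r2 by algebra
  then have nz: "s \<noteq> 0" "- s/2 + r * c \<noteq> 0" "- s/2 - r * c \<noteq> 0"
    using Im_nz unfolding z_def[symmetric] Im_z by auto
  have z1: "cmod z = 1" unfolding z_def using p by (simp add: norm_power)
  have "cmod omega3 = 1" by (simp add: omega3_cis)
  then have unit: "cmod (p * omega3) = 1" "cmod (p * omega3 * omega3) = 1"
    using p by (simp_all add: norm_mult)
  have cube: "p^3 = z" "(p * omega3)^3 = z" "(p * omega3 * omega3)^3 = z"
    unfolding z_def using omega3_cube by (simp_all add: power_mult_distrib power3_eq_cube algebra_simps)
  note root_term = norm_m0_sq_mult_h0_cube_root[OF z1, folded V_def]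
  have "R_m0 h0 z = (1/3) * (complex_of_real ((cmod (m0 p))\<^sup>2) * h0 p +
      complex_of_real ((cmod (m0 (p * omega3)))\<^sup>2) * h0 (p * omega3) +
      complex_of_real ((cmod (m0 (p * omega3 * omega3)))\<^sup>2) * h0 (p * omega3 * omega3))"
    unfolding z_def using p by (intro R_m0_cube) auto
  also have "\<dots> = \<i> * complex_of_real ((2/3) *
      ((c^3 / s + (- c/2 - r * s)^3 / (- s/2 + r * c) + (- c/2 + r * s)^3 / (- s/2 - r * c))
       - V * (c\<^sup>2 / s + (- c/2 - r * s)\<^sup>2 / (- s/2 + r * c) + (- c/2 + r * s)\<^sup>2 / (- s/2 - r * c))))"
    unfolding root_term[OF p cube(1)] root_term[OF unit(1) cube(2)] root_term[OF unit(2) cube(3)] coords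
    by (simp add: algebra_simps)
  also have "\<dots> = \<i> * complex_of_real ((2/3) *
      (3 * (c^3 - 3 * c * s\<^sup>2) / (3 * c\<^sup>2 * s - s^3) - V * (3 / (3 * c\<^sup>2 * s - s^3))))"
    unfolding cube_root_fraction_identities[OF cs r2 nz] ..
  also have "\<dots> = h0 z"
    unfolding h0_def Re_z[symmetric] Im_z[symmetric] V_def
    using Im_nz by (simp add: z_def field_simps)
  finally show ?thesis unfolding z_def .
qed

text \<open>A measurable inverse of \<open>circ\<close> on the unit circle; the clamping to \<open>[-1, 1]\<close> only
  serves measurability, since \<open>arccos\<close> is junk outside that interval.\<close>
definition circ_angle :: "complex \<Rightarrow> real" where
  "circ_angle z = (let a = arccos (max (-1) (min 1 (Re z)))
                   in (if 0 \<le> Im z then a else 2 * pi - a) / (2 * pi))"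

lemma circ_angle_measurable [measurable]: "circ_angle \<in> borel_measurable borel"
proof -
  have "continuous_on UNIV (\<lambda>x. arccos (max (-1) (min 1 x)))"
    by (rule continuous_on_arccos) (auto intro!: continuous_intros)
  then have [measurable]: "(\<lambda>x. arccos (max (-1) (min 1 x))) \<in> borel_measurable borel"
    by (rule borel_measurable_continuous_onI)
  show ?thesis unfolding circ_angle_def Let_def by measurable
qed

lemma circ_circ_angle:
  assumes "cmod z = 1"
  shows "circ (circ_angle z) = z"
proof -
  have Re_bound: "\<bar>Re z\<bar> \<le> 1" using abs_Re_le_cmod[of z] assms by simp
  then have clamp: "max (-1) (min 1 (Re z)) = Re z" by linarith
  have "(Re z)\<^sup>2 + (Im z)\<^sup>2 = 1" using assms unfolding cmod_def by simp
  then have "1 - (Re z)\<^sup>2 = (Im z)\<^sup>2" by linarith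
  then have "sqrt (1 - (Re z)\<^sup>2) = \<bar>Im z\<bar>" by (simp only: real_sqrt_abs)
  then have sin_a: "sin (arccos (Re z)) = \<bar>Im z\<bar>"
    using sin_arccos_abs[OF Re_bound] by simp
  have cos_a: "cos (arccos (Re z)) = Re z"
    using Re_bound by (intro cos_arccos) linarith+
  have angle: "2 * pi * circ_angle z = (if 0 \<le> Im z then arccos (Re z) else 2 * pi - arccos (Re z))"
    unfolding circ_angle_def Let_def clamp by simp
  show ?thesis
  proof (cases "0 \<le> Im z")
    case True
    then show ?thesis using cos_a sin_a angle by (simp add: complex_eq_iff)
  next
    case False
    then show ?thesis using cos_a sin_a angle by (simp add: complex_eq_iff)
  qed
qed

lemma circ_angle_circ:
  assumes "0 \<le> t" "t < 1"
  shows "circ_angle (circ t) = t"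
proof (cases "t \<le> 1/2")
  case True
  then have "0 \<le> 2 * pi * t" "2 * pi * t \<le> pi" using assms by auto
  then have "0 \<le> sin (2 * pi * t)" "arccos (cos (2 * pi * t)) = 2 * pi * t"
    by (simp_all add: sin_ge_zero arccos_cos)
  then show ?thesis
    unfolding circ_angle_def Let_def by simp
next
  case False
  then have "sin (2 * pi * t) < 0" using assms by (intro sin_lt_zero) auto
  moreover have "arccos (cos (2 * pi * t)) = 2 * pi - 2 * pi * t"
    using assms False arccos_cos[of "2 * pi - 2 * pi * t"] by simp
  ultimately show ?thesis
    unfolding circ_angle_def Let_def by simp
qed

lemma circ_angle_range: "circ_angle z \<in> {0..1}"
proof -
  have "0 \<le> arccos (max (-1) (min 1 (Re z)))" "arccos (max (-1) (min 1 (Re z))) \<le> pi"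
    by (intro arccos_lbound arccos_ubound; simp)+
  then show ?thesis unfolding circ_angle_def Let_def by (simp add: divide_le_eq)
qed

lemma AE_haar_circle_of_null:
  assumes S: "S \<in> null_sets lborel" and P: "\<And>t. t \<in> {0..1} \<Longrightarrow> t \<notin> S \<Longrightarrow> P (circ t)"
  shows "AE z in haar_circle. P z"
proof (rule AE_I')
  define N where "N = {z. circ_angle z \<in> S \<or> cmod z \<noteq> 1}"
  have [measurable]: "S \<in> sets borel" using S by (simp add: null_sets_def)
  have N_sets: "N \<in> sets borel" unfolding N_def by measurable
  have "circ -` N \<inter> space unit_lborel \<subseteq> (S \<union> {1}) \<inter> {0..1}"
  proof
    fix t
    assume "t \<in> circ -` N \<inter> space unit_lborel"
    then have "0 \<le> t" "t \<le> 1" "circ_angle (circ t) \<in> S" unfolding N_def by auto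
    then show "t \<in> (S \<union> {1}) \<inter> {0..1}"
      using circ_angle_circ[of t] by (cases "t = 1") auto
  qed
  then have "emeasure unit_lborel (circ -` N \<inter> space unit_lborel) \<le> emeasure unit_lborel ((S \<union> {1}) \<inter> {0..1})"
    by (rule emeasure_mono) (auto simp: sets_restrict_space_iff)
  also have "\<dots> = emeasure lborel ((S \<union> {1}) \<inter> {0..1})"
    by (rule emeasure_restrict_space) auto
  also have "\<dots> = 0"
  proof -
    have "(S \<union> {1}) \<inter> {0..1} \<in> null_sets lborel"
      using S by (intro null_set_Int2 null_sets.Un) auto
    then show ?thesis by (simp only: null_sets_def mem_Collect_eq)
  qed
  finally have "emeasure haar_circle N = 0"
    unfolding haar_circle_def by (simp add: emeasure_distr N_sets)
  then show "N \<in> null_sets haar_circle" using N_sets by (simp add: null_sets_def)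
  show "{z \<in> space haar_circle. \<not> P z} \<subseteq> N"
    using P circ_circ_angle circ_angle_range unfolding N_def by fastforce
qed

lemma R_m0_eq_at_circ:
  assumes t: "t \<in> {0..1}" and "sin (2 * pi * t) \<noteq> 0"
    and agree: "\<And>j::real. j \<in> {0, 1, 2} \<Longrightarrow> h (circ ((j + t) / 3)) = h0 (circ ((j + t) / 3))"
    and "h (circ t) = h0 (circ t)"
  shows "R_m0 h (circ t) = h (circ t)"
proof -
  define p where "p = circ (t / 3)"
  have p_cube: "p^3 = circ t" unfolding p_def Complex.DeMoivre by (simp add: mult.assoc)
  have roots: "p = circ ((0 + t) / 3)" "p * omega3 = circ ((1 + t) / 3)"
    "p * omega3 * omega3 = circ ((2 + t) / 3)"
    unfolding p_def omega3_cis cis_mult by (simp_all add: field_simps)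
  have "h p = h0 p" unfolding roots(1) by (rule agree) simp
  moreover have "h (p * omega3) = h0 (p * omega3)" unfolding roots(2) by (rule agree) simp
  moreover have "h (p * omega3 * omega3) = h0 (p * omega3 * omega3)"
    unfolding roots(3) by (rule agree) simp
  moreover have "p \<noteq> 0" by (simp add: p_def)
  ultimately have "R_m0 h (circ t) = R_m0 h0 (p^3)"
    unfolding p_cube[symmetric] by (simp add: R_m0_cube)
  also have "\<dots> = h0 (p^3)"
  proof (rule R_m0_h0_cube)
    show "cmod p = 1" by (simp add: p_def)
    show "Im (p^3) \<noteq> 0" using assms(2) unfolding p_cube by simp
  qed
  finally show ?thesis unfolding p_cube using assms(4) by simp
qed

text \<open>Almost surely \<open>h\<close> agrees with \<open>h0\<close> at all three cube roots \<open>circ ((j + t) / 3)\<close>,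
  because affine maps preserve Lebesgue null sets.\<close>
lemma AE_R_m0_eq_of_is_h:
  assumes "is_h h"
  shows "AE z in haar_circle. R_m0 h z = h z"
proof -
  have [measurable]: "h \<in> borel_measurable borel"
    using assms unfolding is_h_def measurable_haar_circle by simp
  define Q where "Q t \<longleftrightarrow> (t \<in> {0..1} \<longrightarrow> h (circ t) = h0 (circ t))" for t
  have "AE t in unit_lborel. h (circ t) = h0 (circ t)"
    by (rule AE_haar_circle_imp_unit[OF is_h_imp_AE_eq_h0[OF assms]])
  then have Q: "AE t in lborel. Q t"
    unfolding Q_def by (subst (asm) AE_restrict_space_iff) simp_all
  have Q_pred: "Measurable.pred borel Q" unfolding Q_def by measurable
  have Q_shift: "AE t in lborel. Q (j / 3 + 1/3 * t)" for j :: real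
    by (rule AE_borel_affine[OF _ Q_pred Q]) simp
  have "AE t in lborel. sin (2 * pi * t) \<noteq> 0 \<and> Q t \<and>
      (\<forall>j\<in>{0, 1, 2}. Q ((j + t) / 3))"
    using AE_sin_2pi_nonzero Q Q_shift[of 0] Q_shift[of 1] Q_shift[of 2]
    by eventually_elim (simp add: add_divide_distrib)
  then obtain S where bad: "{t \<in> space lborel. \<not> (sin (2 * pi * t) \<noteq> 0 \<and> Q t \<and>
      (\<forall>j\<in>{0, 1, 2}. Q ((j + t) / 3)))} \<subseteq> S"
    and "emeasure lborel S = 0" "S \<in> sets lborel"
    by (rule AE_E)
  then have S: "S \<in> null_sets lborel" by (simp add: null_sets_def)
  show ?thesis
  proof (rule AE_haar_circle_of_null[OF S])
    fix t :: real
    assume t: "t \<in> {0..1}" "t \<notin> S"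
    then have good: "sin (2 * pi * t) \<noteq> 0" "Q t" "\<And>j. j \<in> {0, 1, 2} \<Longrightarrow> Q ((j + t) / 3)"
      using bad by auto
    show "R_m0 h (circ t) = h (circ t)"
    proof (rule R_m0_eq_at_circ[OF t(1) good(1)])
      fix j :: real
      assume "j \<in> {0, 1, 2}"
      moreover from this have "(j + t) / 3 \<in> {0..1}" using t(1) by auto
      ultimately show "h (circ ((j + t) / 3)) = h0 (circ ((j + t) / 3))"
        using good(3) unfolding Q_def by blast
    qed (use good(2) t(1) in \<open>simp add: Q_def\<close>)
  qed
qed

theorem proposition3p7:
  shows "(\<exists>h. is_h h) \<and>
    (\<forall>h. is_h h \<longrightarrow>
       integrable haar_circle (\<lambda>z. (cmod (h z))\<^sup>2) \<and>
       \<not> (\<exists>C. AE z in haar_circle. cmod (h z) \<le> C) \<and>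
       (AE z in haar_circle. R_m0 h z = h z) \<and>
       (SUP n. \<integral>\<^sup>+ z. ennreal ((cmod (m0_iter n z))\<^sup>2 * (cmod (h z))\<^sup>2) \<partial>haar_circle) = \<infinity>)"
  using is_h_h0 integrable_norm_sq_of_is_h not_AE_bounded_of_is_h AE_R_m0_eq_of_is_h
    SUP_nn_integral_m0_iter_is_h by blast

end
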